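(* Let $\mathcal P\subset\mathbb R^n$ be an $n$-dimensional convex polytope and consider $\dot x=Ax+a+Bu$, $x\in\mathcal P$, with $\operatorname{rank}(B)=n-1$, $(A,B)$ controllable and $\operatorname{int}\mathcal P\cap\mathcal O=\emptyset$. Let $y\ne z$ be points of $\mathcal P$ and let $l$ be the line segment joining them. If $z,y\notin\mathcal O$ and $\beta^Ty<\beta^Tz$, then $z\xrightarrow{l}y$.
   Context: $\mathcal B=\operatorname{Im}(B)$, $\mathcal O=\{x:Ax+a\in\mathcal B\}$; $\beta$ is the unit normal to $\mathcal B$ with $\beta^T(Ax+a)\le0$ for all $x\in\mathcal P$. $z\xrightarrow{l}y$ means there exist a piecewise continuous control $u$ and $T\ge0$ such that the solution $\phi^u_t(z)$ satisfies $\phi^u_T(z)=y$ and $\phi^u_t(z)\in l$ for all $t\in[0,T]$. *)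

theory Defs
  imports "HOL-Analysis.Analysis"
begin

definition mat_pow :: "real^'n^'n \<Rightarrow> nat \<Rightarrow> real^'n^'n" where
  "mat_pow A k = ((\<lambda>M. A ** M) ^^ k) (mat 1)"

definition controllable :: "real^'n^'n \<Rightarrow> real^'m^'n \<Rightarrow> bool" where
  "controllable A B \<longleftrightarrow>
     dim (span (\<Union>k<CARD('n). columns (mat_pow A k ** B))) = CARD('n)"

(* u is piecewise continuous on [0,T]: finitely many breakpoints
   0 = t_0 < t_1 < ... < t_k = T, and on each open piece u coincides with a
   function continuous on the closed piece (so one-sided limits exist). *)
definition piecewise_continuous_on :: "real \<Rightarrow> (real \<Rightarrow> 'b::real_normed_vector) \<Rightarrow> bool" where
  "piecewise_continuous_on T u \<longleftrightarrow>
     (\<exists>ts::real list. ts \<noteq> [] \<and> hd ts = 0 \<and> last ts = T \<and> sorted ts \<and>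
        (\<forall>i < length ts - 1. \<exists>g. continuous_on {ts!i..ts!(Suc i)} g \<and>
              (\<forall>t. ts!i < t \<and> t < ts!(Suc i) \<longrightarrow> u t = g t)))"

(* phi is the (Caratheodory) solution on [0,T] of x' = A x + a + B u(t), x(0) = z *)
definition is_solution ::
  "real^'n^'n \<Rightarrow> real^'n \<Rightarrow> real^'m^'n \<Rightarrow> (real \<Rightarrow> real^'m) \<Rightarrow> real^'n \<Rightarrow> real
     \<Rightarrow> (real \<Rightarrow> real^'n) \<Rightarrow> bool" where
  "is_solution A a B u z T phi \<longleftrightarrow>
     continuous_on {0..T} phi \<and> phi 0 = z \<and>
     (\<forall>t\<in>{0..T}. ((\<lambda>s. A *v phi s + a + B *v u s) has_integral (phi t - z)) {0..t})"

definition reach_within ::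
  "real^'n^'n \<Rightarrow> real^'n \<Rightarrow> real^'m^'n \<Rightarrow> real^'n \<Rightarrow> (real^'n) set \<Rightarrow> real^'n \<Rightarrow> bool" where
  "reach_within A a B z l y \<longleftrightarrow>
     (\<exists>u T phi. T \<ge> 0 \<and> piecewise_continuous_on T u \<and> is_solution A a B u z T phi \<and>
        phi T = y \<and> (\<forall>t\<in>{0..T}. phi t \<in> l))"

definition O_set :: "real^'n^'n \<Rightarrow> real^'n \<Rightarrow> real^'m^'n \<Rightarrow> (real^'n) set" where
  "O_set A a B = {x. A *v x + a \<in> range (\<lambda>v. B *v v)}"

end

theory Submission
  imports Defs
begin

text \<open>Since \<open>rank B = n - 1\<close> and \<open>\<beta>\<close> annihilates \<open>Im B\<close>, the input directions are exactly the
  hyperplane \<open>\<beta>\<^sup>\<bottom>\<close>. Hence a point lies outside \<open>\<O>\<close> iff the drift \<open>Ax + a\<close> has a nonzero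
  \<open>\<beta>\<close>-component, which on \<open>\<P>\<close> means \<open>\<beta>\<^sup>T(Ax + a) < 0\<close>. Along the segment from \<open>z\<close> to
  \<open>y\<close> this component is affine, so it is negative throughout, and the control can cancel
  everything except a multiple of \<open>y - z\<close>. Moving as \<open>z + s(t)(y - z)\<close>, the parameter obeys
  the scalar equation \<open>s' = \<alpha> + \<gamma> s\<close> with \<open>\<alpha> > 0\<close> and \<open>\<alpha> + \<gamma> > 0\<close>, so it climbs from 0 to 1
  in finite time.\<close>

lemma range_matrix_vector_mult_eq_hyperplane:
  fixes B :: "real^'m^'n" and \<beta> :: "real^'n"
  assumes "rank B = CARD('n) - 1" and "\<beta> \<noteq> 0" and "\<forall>v. \<beta> \<bullet> (B *v v) = 0"
  shows "range (\<lambda>v. B *v v) = {w. \<beta> \<bullet> w = 0}"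
proof (rule subspace_dim_equal)
  show "subspace (range (\<lambda>v. B *v v))"
    using linear_subspace_image[OF matrix_vector_mul_linear[of B] subspace_UNIV] by simp
  show "subspace {w. \<beta> \<bullet> w = 0}" by (rule subspace_hyperplane)
  show "range (\<lambda>v. B *v v) \<subseteq> {w. \<beta> \<bullet> w = 0}" using assms(3) by auto
  show "dim {w. \<beta> \<bullet> w = 0} \<le> dim (range (\<lambda>v. B *v v))"
    using assms(1) dim_hyperplane[OF assms(2)] by (simp add: rank_dim_range)
qed

lemma inner_drift_neg_if_notin_O_set:
  assumes "range (\<lambda>v. B *v v) = {w. \<beta> \<bullet> w = 0}"
    and "\<beta> \<bullet> (A *v x + a) \<le> 0" and "x \<notin> O_set A a B"
  shows "\<beta> \<bullet> (A *v x + a) < 0"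
  using assms by (auto simp: O_set_def)

lemma exists_input_steering_into_direction:
  fixes B :: "real^'m^'n"
  assumes "range (\<lambda>v. B *v v) = {w. \<beta> \<bullet> w = 0}" and "\<beta> \<bullet> d \<noteq> 0"
  obtains v where "w + B *v v = ((\<beta> \<bullet> w) / (\<beta> \<bullet> d)) *\<^sub>R d"
proof -
  have "\<beta> \<bullet> (((\<beta> \<bullet> w) / (\<beta> \<bullet> d)) *\<^sub>R d - w) = 0"
    using assms(2) by (simp add: inner_diff_right)
  then have "((\<beta> \<bullet> w) / (\<beta> \<bullet> d)) *\<^sub>R d - w \<in> range (\<lambda>v. B *v v)"
    using assms(1) by simp
  then show ?thesis using that by (metis add_diff_cancel_left' diff_add_cancel imageE)
qed

lemma piecewise_continuous_on_if_continuous_on: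
  assumes "T \<ge> 0" and "continuous_on {0..T} u"
  shows "piecewise_continuous_on T u"
  unfolding piecewise_continuous_on_def
  using assms by (intro exI[of _ "[0, T]"]) auto

lemma is_solution_if_has_vector_derivative:
  assumes "phi 0 = z"
    and "\<And>t. t \<in> {0..T} \<Longrightarrow>
           (phi has_vector_derivative (A *v phi t + a + B *v u t)) (at t within {0..T})"
  shows "is_solution A a B u z T phi"
  unfolding is_solution_def
proof (intro conjI ballI)
  show "continuous_on {0..T} phi"
    using assms(2) by (meson continuous_on_eq_continuous_within has_vector_derivative_continuous)
  show "phi 0 = z" by (fact assms(1))
  fix t assume "t \<in> {0..T}"
  then have "((\<lambda>s. A *v phi s + a + B *v u s) has_integral (phi t - phi 0)) {0..t}"
    by (intro fundamental_theorem_of_calculus)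
      (auto intro: has_vector_derivative_within_subset[OF assms(2)])
  then show "((\<lambda>s. A *v phi s + a + B *v u s) has_integral (phi t - z)) {0..t}"
    using assms(1) by simp
qed

lemma affine_ode_reaches_one:
  fixes \<alpha> \<gamma> :: real
  assumes "\<alpha> > 0" and "\<alpha> + \<gamma> > 0"
  obtains s T where "T > 0" "s 0 = 0" "s T = 1" "\<And>t. t \<in> {0..T} \<Longrightarrow> s t \<in> {0..1}"
    "\<And>t. (s has_real_derivative (\<alpha> + \<gamma> * s t)) (at t)"
proof (cases "\<gamma> = 0")
  case True
  show ?thesis
  proof (rule that[where s="\<lambda>t. \<alpha> * t" and T="1 / \<alpha>"])
    show "((\<lambda>t. \<alpha> * t) has_real_derivative \<alpha> + \<gamma> * (\<alpha> * t)) (at t)" for t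
      using True by (auto intro!: derivative_eq_intros)
    show "\<alpha> * t \<in> {0..1}" if "t \<in> {0..1 / \<alpha>}" for t
      using that assms(1) by (auto simp: field_simps)
  qed (use assms(1) in simp_all)
next
  case False
  define T where "T = ln ((\<alpha> + \<gamma>) / \<alpha>) / \<gamma>"
  define s where "s t = \<alpha> / \<gamma> * (exp (\<gamma> * t) - 1)" for t
  have exp_T: "exp (\<gamma> * T) = (\<alpha> + \<gamma>) / \<alpha>"
    using False assms by (simp add: T_def)
  have "T > 0"
  proof (cases "\<gamma> > 0")
    case True
    then have "(\<alpha> + \<gamma>) / \<alpha> > 1" using assms by (simp add: field_simps)
    then show ?thesis using True by (simp add: T_def)
  next
    case neg: False
    then have "(\<alpha> + \<gamma>) / \<alpha> < 1" and "(\<alpha> + \<gamma>) / \<alpha> > 0"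
      using False assms by (auto simp: field_simps)
    then show ?thesis using neg False by (simp add: T_def divide_neg_neg)
  qed
  have deriv: "(s has_real_derivative (\<alpha> + \<gamma> * s t)) (at t)" for t
    unfolding s_def using False by (auto intro!: derivative_eq_intros simp: field_simps)
  have deriv_exp: "(s has_real_derivative \<alpha> * exp (\<gamma> * t)) (at t)" for t
    using deriv[of t] False by (simp add: s_def field_simps)
  have mono: "s t \<le> s t'" if "t \<le> t'" for t t'
  proof (rule DERIV_nonneg_imp_nondecreasing[OF that])
    show "\<exists>y. (s has_real_derivative y) (at x) \<and> 0 \<le> y" for x
      using deriv_exp[of x] assms(1) by (intro exI[of _ "\<alpha> * exp (\<gamma> * x)"]) simp
  qed
  have "s 0 = 0" "s T = 1"
    using exp_T False assms(1) by (simp_all add: s_def field_simps)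
  moreover have "s t \<in> {0..1}" if "t \<in> {0..T}" for t
    using that mono[of 0 t] mono[of t T] \<open>s 0 = 0\<close> \<open>s T = 1\<close> by auto
  ultimately show ?thesis using that \<open>T > 0\<close> deriv by blast
qed

lemma reach_within_closed_segment_if_drift_transversal:
  fixes A :: "real^'n^'n" and B :: "real^'m^'n"
  assumes range_B: "range (\<lambda>v. B *v v) = {w. \<beta> \<bullet> w = 0}"
    and drift_z: "\<beta> \<bullet> (A *v z + a) < 0" and drift_y: "\<beta> \<bullet> (A *v y + a) < 0"
    and descent: "\<beta> \<bullet> y < \<beta> \<bullet> z"
  shows "reach_within A a B z (closed_segment z y) y"
proof -
  define d where "d = y - z"
  have "\<beta> \<bullet> d < 0" using descent by (simp add: d_def inner_diff_right)
  define \<alpha> where "\<alpha> = (\<beta> \<bullet> (A *v z + a)) / (\<beta> \<bullet> d)"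
  define \<gamma> where "\<gamma> = (\<beta> \<bullet> (A *v d)) / (\<beta> \<bullet> d)"
  have "\<alpha> > 0" using drift_z \<open>\<beta> \<bullet> d < 0\<close> by (simp add: \<alpha>_def divide_neg_neg)
  have "A *v y + a = (A *v z + a) + A *v d"
    by (simp add: d_def matrix_vector_mult_diff_distrib)
  then have "\<alpha> + \<gamma> = (\<beta> \<bullet> (A *v y + a)) / (\<beta> \<bullet> d)"
    by (simp add: \<alpha>_def \<gamma>_def add_divide_distrib inner_add_right)
  then have "\<alpha> + \<gamma> > 0" using drift_y \<open>\<beta> \<bullet> d < 0\<close> by (simp add: divide_neg_neg)
  obtain s T where "T > 0" "s 0 = 0" "s T = 1" and s_range: "\<And>t. t \<in> {0..T} \<Longrightarrow> s t \<in> {0..1}"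
    and s_deriv: "\<And>t. (s has_real_derivative (\<alpha> + \<gamma> * s t)) (at t)"
    by (rule affine_ode_reaches_one[OF \<open>\<alpha> > 0\<close> \<open>\<alpha> + \<gamma> > 0\<close>]) blast
  have "\<beta> \<bullet> d \<noteq> 0" using \<open>\<beta> \<bullet> d < 0\<close> by simp
  obtain v0 where v0: "A *v z + a + B *v v0 = \<alpha> *\<^sub>R d"
    using exists_input_steering_into_direction[OF range_B \<open>\<beta> \<bullet> d \<noteq> 0\<close>, where w="A *v z + a"]
    unfolding \<alpha>_def .
  obtain v1 where v1: "A *v d + B *v v1 = \<gamma> *\<^sub>R d"
    using exists_input_steering_into_direction[OF range_B \<open>\<beta> \<bullet> d \<noteq> 0\<close>, where w="A *v d"]
    unfolding \<gamma>_def .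
  define u where "u t = v0 + s t *\<^sub>R v1" for t
  define phi where "phi t = z + s t *\<^sub>R d" for t
  have closed_loop: "A *v phi t + a + B *v u t = (\<alpha> + \<gamma> * s t) *\<^sub>R d" for t
  proof -
    have "A *v phi t + a + B *v u t = (A *v z + a + B *v v0) + s t *\<^sub>R (A *v d + B *v v1)"
      by (simp add: phi_def u_def matrix_vector_right_distrib matrix_vector_mult_scaleR
          scaleR_add_right)
    also have "\<dots> = \<alpha> *\<^sub>R d + s t *\<^sub>R (\<gamma> *\<^sub>R d)"
      by (simp only: v0 v1)
    finally show ?thesis by (simp add: algebra_simps)
  qed
  have "continuous_on {0..T} s"
    using s_deriv by (meson DERIV_isCont continuous_at_imp_continuous_on)
  then have "piecewise_continuous_on T u"
    using \<open>T > 0\<close> unfolding u_def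
    by (intro piecewise_continuous_on_if_continuous_on continuous_intros) auto
  moreover have "is_solution A a B u z T phi"
  proof (rule is_solution_if_has_vector_derivative)
    show "phi 0 = z" by (simp add: phi_def \<open>s 0 = 0\<close>)
    fix t
    have "(phi has_vector_derivative (\<alpha> + \<gamma> * s t) *\<^sub>R d) (at t)"
      unfolding phi_def using s_deriv[of t] by (auto intro!: derivative_eq_intros)
    then show "(phi has_vector_derivative (A *v phi t + a + B *v u t)) (at t within {0..T})"
      unfolding closed_loop by (rule has_vector_derivative_at_within)
  qed
  moreover have "phi t \<in> closed_segment z y" if "t \<in> {0..T}" for t
    using s_range[OF that] unfolding in_segment phi_def d_def
    by (intro exI[of _ "s t"]) (auto simp: algebra_simps)
  moreover have "phi T = y" by (simp add: phi_def \<open>s T = 1\<close> d_def)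
  ultimately show ?thesis
    unfolding reach_within_def using \<open>T > 0\<close> by (intro exI[of _ u] exI[of _ T] exI[of _ phi]) auto
qed

theorem lemma5:
  fixes P :: "(real^'n) set" and A :: "real^'n^'n" and a :: "real^'n"
    and B :: "real^'m^'n" and \<beta> y z :: "real^'n"
  assumes "polytope P" and "aff_dim P = int CARD('n)"
    and "rank B = CARD('n) - 1"
    and "controllable A B"
    and "interior P \<inter> O_set A a B = {}"
    and "norm \<beta> = 1" and "\<forall>v. \<beta> \<bullet> (B *v v) = 0"
    and "\<forall>x\<in>P. \<beta> \<bullet> (A *v x + a) \<le> 0"
    and "y \<in> P" and "z \<in> P" and "y \<noteq> z"
    and "z \<notin> O_set A a B" and "y \<notin> O_set A a B"
    and "\<beta> \<bullet> y < \<beta> \<bullet> z"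
  shows "reach_within A a B z (closed_segment z y) y"
proof (rule reach_within_closed_segment_if_drift_transversal)
  show range_B: "range (\<lambda>v. B *v v) = {w. \<beta> \<bullet> w = 0}"
    using assms(3,6,7) by (intro range_matrix_vector_mult_eq_hyperplane) auto
  show "\<beta> \<bullet> (A *v z + a) < 0" "\<beta> \<bullet> (A *v y + a) < 0"
    using assms(8-10,12,13) by (auto intro: inner_drift_neg_if_notin_O_set[OF range_B])
  show "\<beta> \<bullet> y < \<beta> \<bullet> z" by (fact assms(14))
qed

end
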